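(* Let $\ell\in\mathbb{N}$, $s=2\ell-1$, and let $n_1,n_2,N_1,N_2\in\mathbb{N}$ satisfy $$\frac{n_1}{N_1}=\frac{n_2}{N_2}=s .$$ Let $m_1,m_2\in\mathbb{N}$ be arbitrary integers with $m_1<n_1$ and $m_2<n_2$, and put $\mathbf n=(n_1,n_2)$, $\mathbf m=(m_1,m_2)$. Let $\mathbf f=(f_1,f_2,f_3)$ and $\tilde{\mathbf f}=(\tilde f_1,\tilde f_2,\tilde f_3)$ be functions from $[-1,1]^2$ to $\mathbb{R}^3$. Define the color images (triples of matrices) $$I(i,j)=\mathbf f(x_i^{n_1},y_j^{n_2}),\quad \tilde I(i,j)=\tilde{\mathbf f}(x_i^{n_1},y_j^{n_2}),\qquad i=1,\dots,n_1,\ j=1,\dots,n_2,$$ $$R(i,j)=\mathbf f(x_i^{N_1},y_j^{N_2}),\qquad i=1,\dots,N_1,\ j=1,\dots,N_2,$$ and the output image $\tilde R=[\tilde R_1,\tilde R_2,\tilde R_3]$ by $$\tilde R_\lambda(i,j)=V_{\mathbf n}^{\mathbf m}\tilde f_\lambda(x_i^{N_1},y_j^{N_2}),\qquad i=1,\dots,N_1,\ j=1,\dots,N_2,\ \lambda=1,2,3 .$$ Then $$\mathrm{MSE}(R,\tilde R)\le s^2\,\mathrm{MSE}(I,\tilde I),$$ and the same estimate holds for the luma channels: $\mathrm{MSE}(R_Y,\tilde R_Y)\le s^2\,\mathrm{MSE}(I_Y,\tilde I_Y)$. If moreover $I=\tilde I$, then $\mathrm{PSNR}(R,\tilde R)=\infty$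 and $\mathrm{SSIM}(R,\tilde R)=1$.
   Context: Chebyshev nodes: for $n\in\mathbb N$ and $k=1,\dots,n$, $t_k^n=\frac{(2k-1)\pi}{2n}$, and $x_k^n=y_k^n=\cos(t_k^n)$ (zeros of the first-kind Chebyshev polynomial of degree $n$). Throughout, $\xi\in[-1,1]$ and $t\in[0,\pi]$ are related by $\xi=\cos t$. Orthogonal VP polynomials: for $n,m\in\mathbb N$ with $m\le n$ and $r=0,\dots,n-1$, $q^n_{m,r}(\xi)=\cos(rt)$ if $0\le r\le n-m$, and $q^n_{m,r}(\xi)=\frac{n+m-r}{2m}\cos(rt)+\frac{n-m-r}{2m}\cos((2n-r)t)$ if $n-m<r<n$. Fundamental VP polynomials: $\Phi^{n}_{m,k}(\xi)=\frac2n\Big[\frac12+\sum_{r=1}^{n-1}\cos(r t_k^n)\,q^n_{m,r}(\xi)\Big]$, $k=1,\dots,n$. VP polynomial of $g:[-1,1]^2\to\mathbb R$: $V_{\mathbf n}^{\mathbf m}g(x,y)=\sum_{i=1}^{n_1}\sum_{j=1}^{n_2}g(x_i^{n_1},y_j^{n_2})\,\Phi^{n_1}_{m_1,i}(x)\,\Phi^{n_2}_{m_2,j}(y)$. Metrics: for real $\nu\times\mu$ matrices, $\mathrm{MSE}(A,B)=\frac1{\nu\mu}\|A-B\|_F^2$ (Frobenius norm). For color images $A=[A_1,A_2,A_3]$, $B=[B_1,B_2,B_3]$, $\mathrm{MSE}(A,B)=\frac13\sum_{\lambda=1}^3\mathrm{MSE}(A_\lambda,B_\lambda)$. The luma channel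 is $A_Y=\sum_{\lambda=1}^3\alpha_\lambda A_\lambda+\alpha_4$ (entrywise, with fixed real coefficients $\alpha_1,\dots,\alpha_4$, those of the ITU-R BT.601 standard). $\mathrm{PSNR}(A,B)=20\log_{10}\big(\max_f/\sqrt{\mathrm{MSE}(A_Y,B_Y)}\big)$, where $\max_f>0$ is the maximal pixel value, with the convention that it equals $\infty$ when $\mathrm{MSE}(A_Y,B_Y)=0$. $\mathrm{SSIM}(A,B)=\frac{(2\mu_A\mu_B+c_1)(2\,\mathrm{cov}+c_2)}{(\mu_A^2+\mu_B^2+c_1)(\sigma_A^2+\sigma_B^2+c_2)}$, where $\mu_A,\mu_B$ and $\sigma_A^2,\sigma_B^2$ are the averages and variances of the entries of $A_Y,B_Y$, $\mathrm{cov}$ their covariance, and $c_1,c_2>0$ fixed constants. *)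

theory Defs
  imports Complex_Main "HOL-Library.Extended_Real"
begin

definition cheb_t :: "nat \<Rightarrow> nat \<Rightarrow> real" where
  "cheb_t n k = (2 * real k - 1) * pi / (2 * real n)"

definition cheb :: "nat \<Rightarrow> nat \<Rightarrow> real" where
  "cheb n k = cos (cheb_t n k)"

definition vp_q :: "nat \<Rightarrow> nat \<Rightarrow> nat \<Rightarrow> real \<Rightarrow> real" where
  "vp_q n m r \<xi> = (let t = arccos \<xi> in
     if r \<le> n - m then cos (real r * t)
     else (real n + real m - real r) / (2 * real m) * cos (real r * t)
        + (real n - real m - real r) / (2 * real m) * cos ((2 * real n - real r) * t))"

definition vp_Phi :: "nat \<Rightarrow> nat \<Rightarrow> nat \<Rightarrow> real \<Rightarrow> real" where
  "vp_Phi n m k \<xi> = 2 / real n *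
     (1/2 + (\<Sum>r = 1..n - 1. cos (real r * cheb_t n k) * vp_q n m r \<xi>))"

definition vp_V :: "nat \<Rightarrow> nat \<Rightarrow> nat \<Rightarrow> nat \<Rightarrow> (real \<Rightarrow> real \<Rightarrow> real) \<Rightarrow> real \<Rightarrow> real \<Rightarrow> real" where
  "vp_V n1 n2 m1 m2 g x y =
     (\<Sum>i = 1..n1. \<Sum>j = 1..n2. g (cheb n1 i) (cheb n2 j) * vp_Phi n1 m1 i x * vp_Phi n2 m2 j y)"

text \<open>A (real) nu x mu matrix is represented as a function of (row, column), indices
  i = 1..nu, j = 1..mu.  A color image is a function of (channel, row, column), channel 1..3.\<close>
type_synonym matrix = "nat \<Rightarrow> nat \<Rightarrow> real"
type_synonym cimage = "nat \<Rightarrow> nat \<Rightarrow> nat \<Rightarrow> real"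

definition mse :: "nat \<Rightarrow> nat \<Rightarrow> matrix \<Rightarrow> matrix \<Rightarrow> real" where
  "mse \<nu> \<mu> A B = (\<Sum>i = 1..\<nu>. \<Sum>j = 1..\<mu>. (A i j - B i j)\<^sup>2) / (real \<nu> * real \<mu>)"

definition mse_color :: "nat \<Rightarrow> nat \<Rightarrow> cimage \<Rightarrow> cimage \<Rightarrow> real" where
  "mse_color \<nu> \<mu> A B = (\<Sum>c = 1..3. mse \<nu> \<mu> (A c) (B c)) / 3"

definition luma :: "(nat \<Rightarrow> real) \<Rightarrow> cimage \<Rightarrow> matrix" where
  "luma \<alpha> A = (\<lambda>i j. (\<Sum>c = 1..3. \<alpha> c * A c i j) + \<alpha> 4)"

definition psnr :: "real \<Rightarrow> (nat \<Rightarrow> real) \<Rightarrow> nat \<Rightarrow> nat \<Rightarrow> cimage \<Rightarrow> cimage \<Rightarrow> ereal" where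
  "psnr maxf \<alpha> \<nu> \<mu> A B =
     (let e = mse \<nu> \<mu> (luma \<alpha> A) (luma \<alpha> B) in
      if e = 0 then \<infinity> else ereal (20 * log 10 (maxf / sqrt e)))"

definition mat_mean :: "nat \<Rightarrow> nat \<Rightarrow> matrix \<Rightarrow> real" where
  "mat_mean \<nu> \<mu> A = (\<Sum>i = 1..\<nu>. \<Sum>j = 1..\<mu>. A i j) / (real \<nu> * real \<mu>)"

definition mat_cov :: "nat \<Rightarrow> nat \<Rightarrow> matrix \<Rightarrow> matrix \<Rightarrow> real" where
  "mat_cov \<nu> \<mu> A B = (\<Sum>i = 1..\<nu>. \<Sum>j = 1..\<mu>.
      (A i j - mat_mean \<nu> \<mu> A) * (B i j - mat_mean \<nu> \<mu> B)) / (real \<nu> * real \<mu>)"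

definition mat_var :: "nat \<Rightarrow> nat \<Rightarrow> matrix \<Rightarrow> real" where
  "mat_var \<nu> \<mu> A = mat_cov \<nu> \<mu> A A"

definition ssim :: "real \<Rightarrow> real \<Rightarrow> (nat \<Rightarrow> real) \<Rightarrow> nat \<Rightarrow> nat \<Rightarrow> cimage \<Rightarrow> cimage \<Rightarrow> real" where
  "ssim c1 c2 \<alpha> \<nu> \<mu> A B =
     (let AY = luma \<alpha> A; BY = luma \<alpha> B;
          mA = mat_mean \<nu> \<mu> AY; mB = mat_mean \<nu> \<mu> BY in
      ((2 * mA * mB + c1) * (2 * mat_cov \<nu> \<mu> AY BY + c2)) /
      ((mA\<^sup>2 + mB\<^sup>2 + c1) * (mat_var \<nu> \<mu> AY + mat_var \<nu> \<mu> BY + c2)))"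

end

theory Submission
  imports Defs
begin

(* At the Chebyshev nodes t_j^n the discrete orthogonality of cos (r t) (a Dirichlet kernel
   computation) gives Phi^n_{m,k}(x_j^n) = delta_kj for every m, because the modified terms
   cos ((2n - r) t_j^n) = - cos (r t_j^n) recombine to cos (r t_j^n).  Hence V_n^m g interpolates g
   on the n1 x n2 Chebyshev grid.  Since s = 2l - 1 is odd, x_i^N = x_{s(i-1)+l}^{sN}: the coarse
   grid is a subgrid of the fine one, so R and Rt are the restrictions of I and It to N1 N2 of the
   n1 n2 = s^2 N1 N2 pixels.  Summing squared errors over fewer pixels gives the MSE bounds, and
   I = It forces R = Rt, so the luma MSE vanishes and SSIM compares an image with itself. *)

lemma sin_half_mult_dirichlet_sum:
  "sin (x / 2) * (1 + 2 * (\<Sum>r = 1..n. cos (real r * x))) = sin ((real n + 1 / 2) * x)"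
proof (induction n)
  case 0
  then show ?case by simp
next
  case (Suc n)
  have prod_to_sum: "2 * sin y * cos a = sin (a + y) - sin (a - y)" for a y :: real
    by (simp add: sin_add sin_diff)
  have "sin (x / 2) * (1 + 2 * (\<Sum>r = 1..Suc n. cos (real r * x)))
      = sin (x / 2) * (1 + 2 * (\<Sum>r = 1..n. cos (real r * x))) + 2 * sin (x / 2) * cos ((real n + 1) * x)"
    by (simp add: algebra_simps)
  also have "\<dots> = sin ((real n + 1 / 2) * x) + (sin ((real n + 1) * x + x / 2) - sin ((real n + 1) * x - x / 2))"
    unfolding Suc.IH prod_to_sum ..
  also have "\<dots> = sin ((real (Suc n) + 1 / 2) * x)"
    by (simp add: algebra_simps)
  finally show ?case .
qed

lemma dirichlet_sum_at_int_mult_pi: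
  fixes p :: int
  assumes "0 < \<bar>p\<bar>" "\<bar>p\<bar> < 2 * int n"
  shows "1 + 2 * (\<Sum>r = 1..n - 1. cos (real r * (of_int p * pi / real n))) = - cos (of_int p * pi)"
proof -
  define x where "x = of_int \<bar>p\<bar> * pi / real n"
  have sum_sign: "(\<Sum>r = 1..n - 1. cos (real r * x)) = (\<Sum>r = 1..n - 1. cos (real r * (of_int p * pi / real n)))"
    unfolding x_def by (intro sum.cong refl) (cases "p \<ge> 0"; simp)
  have "0 < x / 2" "x / 2 < pi"
    using assms by (auto simp: x_def field_simps)
  then have sin_nz: "sin (x / 2) \<noteq> 0"
    using sin_gt_zero by fastforce
  have "sin (x / 2) * (1 + 2 * (\<Sum>r = 1..n - 1. cos (real r * x))) = sin ((real (n - 1) + 1 / 2) * x)"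
    by (rule sin_half_mult_dirichlet_sum)
  also have "(real (n - 1) + 1 / 2) * x = pi * of_int \<bar>p\<bar> - x / 2"
    using assms by (simp add: x_def field_simps)
  also have "sin (pi * of_int \<bar>p\<bar> - x / 2) = sin (x / 2) * - cos (of_int p * pi)"
    by (cases "p \<ge> 0") (simp_all add: sin_diff mult.commute)
  finally show ?thesis
    by (simp only: mult_left_cancel[OF sin_nz] sum_sign)
qed

lemma cheb_t_bounds:
  assumes "j \<in> {1..n}"
  shows "0 \<le> cheb_t n j" "cheb_t n j \<le> pi"
proof -
  have "(2 * real j - 1) * pi \<le> (2 * real n) * pi"
    using assms by (intro mult_right_mono) auto
  then show "0 \<le> cheb_t n j" "cheb_t n j \<le> pi"
    using assms by (auto simp: cheb_t_def field_simps)
qed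

lemma arccos_cheb:
  assumes "j \<in> {1..n}"
  shows "arccos (cheb n j) = cheb_t n j"
  using cheb_t_bounds[OF assms] by (simp add: cheb_def arccos_cos)

lemma cos_cheb_t_orthogonal:
  assumes "k \<in> {1..n}" "j \<in> {1..n}"
  shows "1 / 2 + (\<Sum>r = 1..n - 1. cos (real r * cheb_t n k) * cos (real r * cheb_t n j))
    = (if k = j then real n / 2 else 0)"
proof -
  define D where "D y = 1 + 2 * (\<Sum>r = 1..n - 1. cos (real r * y))" for y
  have "cos (real r * cheb_t n k) * cos (real r * cheb_t n j)
      = (cos (real r * (cheb_t n k - cheb_t n j)) + cos (real r * (cheb_t n k + cheb_t n j))) / 2" for r
    unfolding cos_times_cos right_diff_distrib distrib_left ..
  then have "1 / 2 + (\<Sum>r = 1..n - 1. cos (real r * cheb_t n k) * cos (real r * cheb_t n j))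
      = (D (cheb_t n k - cheb_t n j) + D (cheb_t n k + cheb_t n j)) / 4"
    unfolding D_def by (simp only: sum_divide_distrib[symmetric] sum.distrib) (simp add: field_simps)
  moreover have "cheb_t n k - cheb_t n j = of_int (int k - int j) * pi / real n"
    "cheb_t n k + cheb_t n j = of_int (int k + int j - 1) * pi / real n"
    using assms by (auto simp: cheb_t_def field_simps)
  moreover have D_sum: "D (of_int (int k + int j - 1) * pi / real n) = - cos (of_int (int k + int j - 1) * pi)"
    unfolding D_def using assms by (intro dirichlet_sum_at_int_mult_pi) auto
  ultimately have split: "1 / 2 + (\<Sum>r = 1..n - 1. cos (real r * cheb_t n k) * cos (real r * cheb_t n j))
      = (D (of_int (int k - int j) * pi / real n) - cos (of_int (int k + int j - 1) * pi)) / 4"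
    by simp
  show ?thesis
  proof (cases "k = j")
    case True
    have "D 0 = 2 * real n - 1"
      using assms by (simp add: D_def)
    moreover have "cos (of_int (int j + int j - 1) * pi) = -1"
      using cos_npi[of "2 * j"] by (simp add: cos_diff algebra_simps)
    ultimately show ?thesis
      using split True by simp
  next
    case False
    then have "D (of_int (int k - int j) * pi / real n) = - cos (of_int (int k - int j) * pi)"
      unfolding D_def using assms by (intro dirichlet_sum_at_int_mult_pi) auto
    moreover have "cos (of_int (int k + int j - 1) * pi) = - cos (of_int (int k - int j) * pi)"
      by (simp add: cos_add cos_diff algebra_simps)
    ultimately show ?thesis
      using split False by simp
  qed
qed

lemma cos_cheb_t_reflect:
  assumes "j \<in> {1..n}"
  shows "cos ((2 * real n - x) * cheb_t n j) = - cos (x * cheb_t n j)"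
proof -
  have "(2 * real n - x) * cheb_t n j = real (2 * j - 1) * pi - x * cheb_t n j"
    using assms by (simp add: cheb_t_def field_simps)
  moreover have "cos (real (2 * j - 1) * pi) = -1"
    using assms by (simp only: cos_npi) simp
  ultimately show ?thesis
    by (simp add: cos_diff)
qed

lemma vp_q_cheb:
  assumes "j \<in> {1..n}" "r \<le> n"
  shows "vp_q n m r (cheb n j) = cos (real r * cheb_t n j)"
proof (cases "r \<le> n - m")
  case False
  then have "m > 0"
    using assms(2) by linarith
  then have "(real n + real m - real r) / (2 * real m) * c + (real n - real m - real r) / (2 * real m) * - c = c"
    for c
    by (simp add: field_simps)
  then show ?thesis
    using False by (simp add: vp_q_def arccos_cheb[OF assms(1)] cos_cheb_t_reflect[OF assms(1)])
qed (simp add: vp_q_def arccos_cheb[OF assms(1)])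

lemma vp_Phi_cheb:
  assumes "k \<in> {1..n}" "j \<in> {1..n}"
  shows "vp_Phi n m k (cheb n j) = (if k = j then 1 else 0)"
proof -
  have "(\<Sum>r = 1..n - 1. cos (real r * cheb_t n k) * vp_q n m r (cheb n j))
      = (\<Sum>r = 1..n - 1. cos (real r * cheb_t n k) * cos (real r * cheb_t n j))"
    using vp_q_cheb[OF assms(2)] by (intro sum.cong refl) auto
  then show ?thesis
    using cos_cheb_t_orthogonal[OF assms] assms by (simp add: vp_Phi_def)
qed

lemma vp_V_cheb:
  assumes "a \<in> {1..n1}" "b \<in> {1..n2}"
  shows "vp_V n1 n2 m1 m2 g (cheb n1 a) (cheb n2 b) = g (cheb n1 a) (cheb n2 b)"
proof -
  have "vp_V n1 n2 m1 m2 g (cheb n1 a) (cheb n2 b)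
      = (\<Sum>i = 1..n1. \<Sum>j = 1..n2. g (cheb n1 i) (cheb n2 j) * (if i = a then 1 else 0) * (if j = b then 1 else 0))"
    unfolding vp_V_def using assms by (intro sum.cong refl) (simp add: vp_Phi_cheb)
  then show ?thesis
    using assms by (simp add: if_distrib[of "(*) _"] cong: if_cong)
qed

definition nested_cheb_index :: "nat \<Rightarrow> nat \<Rightarrow> nat" where
  "nested_cheb_index l i = (2 * l - 1) * (i - 1) + l"

lemma cheb_nested_node:
  assumes "l \<ge> 1" "n = (2 * l - 1) * N" "i \<in> {1..N}"
  shows "nested_cheb_index l i \<in> {1..n}" "cheb n (nested_cheb_index l i) = cheb N i"
proof -
  have "(2 * l - 1) * (i - 1) \<le> (2 * l - 1) * (N - 1)"
    using assms by (simp add: diff_le_mono)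
  also have "\<dots> + l \<le> n"
    using assms by (cases N) simp_all
  finally show "nested_cheb_index l i \<in> {1..n}"
    using assms by (simp add: nested_cheb_index_def)
  have "real (nested_cheb_index l i) = real (2 * l - 1) * real (i - 1) + real l"
    by (simp only: nested_cheb_index_def of_nat_add of_nat_mult)
  then have "2 * real (nested_cheb_index l i) - 1 = real (2 * l - 1) * (2 * real i - 1)"
    using assms by (simp add: algebra_simps)
  moreover have "real (2 * l - 1) > 0"
    using assms by simp
  ultimately show "cheb n (nested_cheb_index l i) = cheb N i"
    using assms(2) by (cases "N = 0") (simp_all add: cheb_def cheb_t_def)
qed

lemma inj_on_nested_cheb_index:
  assumes "l \<ge> 1"
  shows "inj_on (nested_cheb_index l) {1..}"
  using assms by (intro inj_onI) (auto simp: nested_cheb_index_def)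

lemma sum_subgrid_le:
  fixes F :: "'a \<Rightarrow> 'b \<Rightarrow> 'c::ordered_comm_monoid_add"
  assumes "inj_on K A" "K ` A \<subseteq> A'" "inj_on H B" "H ` B \<subseteq> B'" "finite A'" "finite B'"
    and "\<And>a b. a \<in> A' \<Longrightarrow> b \<in> B' \<Longrightarrow> F a b \<ge> 0"
  shows "(\<Sum>i\<in>A. \<Sum>j\<in>B. F (K i) (H j)) \<le> (\<Sum>a\<in>A'. \<Sum>b\<in>B'. F a b)"
proof -
  have "(\<Sum>i\<in>A. \<Sum>j\<in>B. F (K i) (H j)) = sum (case_prod F) (map_prod K H ` (A \<times> B))"
    using map_prod_inj_on[OF assms(1,3)] by (simp add: sum.cartesian_product sum.reindex case_prod_beta')
  also have "\<dots> \<le> sum (case_prod F) (A' \<times> B')"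
    using assms by (intro sum_mono2) (auto simp: map_prod_def)
  also have "\<dots> = (\<Sum>a\<in>A'. \<Sum>b\<in>B'. F a b)"
    by (simp add: sum.cartesian_product)
  finally show ?thesis .
qed

lemma mse_subgrid_le:
  assumes "inj_on K {1..N1}" "K ` {1..N1} \<subseteq> {1..n1}" "inj_on H {1..N2}" "H ` {1..N2} \<subseteq> {1..n2}"
    and "real n1 = s * real N1" "real n2 = s * real N2" "s > 0"
    and "\<And>i j. i \<in> {1..N1} \<Longrightarrow> j \<in> {1..N2} \<Longrightarrow> A i j = A' (K i) (H j) \<and> B i j = B' (K i) (H j)"
  shows "mse N1 N2 A B \<le> s\<^sup>2 * mse n1 n2 A' B'"
proof -
  define S' where "S' = (\<Sum>a = 1..n1. \<Sum>b = 1..n2. (A' a b - B' a b)\<^sup>2)"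
  have "(\<Sum>i = 1..N1. \<Sum>j = 1..N2. (A i j - B i j)\<^sup>2)
      = (\<Sum>i = 1..N1. \<Sum>j = 1..N2. (A' (K i) (H j) - B' (K i) (H j))\<^sup>2)"
    using assms(8) by (intro sum.cong refl) auto
  also have "\<dots> \<le> S'"
    unfolding S'_def using assms(1-4) by (intro sum_subgrid_le) auto
  finally have "mse N1 N2 A B \<le> S' / (real N1 * real N2)"
    unfolding mse_def by (rule divide_right_mono) simp
  moreover have "mse n1 n2 A' B' = S' / (real n1 * real n2)"
    unfolding mse_def S'_def ..
  ultimately show ?thesis
    using assms(5-7) by (simp add: power2_eq_square)
qed

lemma mse_nested_subgrid_le:
  assumes "l \<ge> 1" "n1 = (2 * l - 1) * N1" "n2 = (2 * l - 1) * N2"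
    and "\<And>i j. i \<in> {1..N1} \<Longrightarrow> j \<in> {1..N2} \<Longrightarrow>
      A i j = A' (nested_cheb_index l i) (nested_cheb_index l j) \<and>
      B i j = B' (nested_cheb_index l i) (nested_cheb_index l j)"
  shows "mse N1 N2 A B \<le> (2 * real l - 1)\<^sup>2 * mse n1 n2 A' B'"
proof (rule mse_subgrid_le)
  show "inj_on (nested_cheb_index l) {1..N1}" "inj_on (nested_cheb_index l) {1..N2}"
    using inj_on_subset[OF inj_on_nested_cheb_index[OF assms(1)]] by auto
  show "nested_cheb_index l ` {1..N1} \<subseteq> {1..n1}"
    using cheb_nested_node(1)[OF assms(1,2)] by blast
  show "nested_cheb_index l ` {1..N2} \<subseteq> {1..n2}"
    using cheb_nested_node(1)[OF assms(1,3)] by blast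
  show "real n1 = (2 * real l - 1) * real N1" "real n2 = (2 * real l - 1) * real N2" "2 * real l - 1 > 0"
    using assms(1-3) by simp_all
qed (fact assms(4))

lemma mse_color_le_channelwise:
  assumes "\<And>c. mse \<nu> \<mu> (A c) (B c) \<le> k * mse \<nu>' \<mu>' (A' c) (B' c)"
  shows "mse_color \<nu> \<mu> A B \<le> k * mse_color \<nu>' \<mu>' A' B'"
proof -
  have "(\<Sum>c = 1..3. mse \<nu> \<mu> (A c) (B c)) \<le> k * (\<Sum>c = 1..3. mse \<nu>' \<mu>' (A' c) (B' c))"
    unfolding sum_distrib_left by (intro sum_mono assms)
  then show ?thesis
    by (simp add: mse_color_def divide_right_mono)
qed

lemma luma_cong:
  assumes "\<And>c. c \<in> {1..3} \<Longrightarrow> A c i j = B c i' j'"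
  shows "luma \<alpha> A i j = luma \<alpha> B i' j'"
  using assms by (simp add: luma_def)

lemma mat_mean_cong:
  assumes "\<And>i j. i \<in> {1..\<nu>} \<Longrightarrow> j \<in> {1..\<mu>} \<Longrightarrow> A i j = B i j"
  shows "mat_mean \<nu> \<mu> A = mat_mean \<nu> \<mu> B"
  using assms by (simp add: mat_mean_def)

lemma mat_cov_cong:
  assumes "\<And>i j. i \<in> {1..\<nu>} \<Longrightarrow> j \<in> {1..\<mu>} \<Longrightarrow> A i j = A' i j"
    and "\<And>i j. i \<in> {1..\<nu>} \<Longrightarrow> j \<in> {1..\<mu>} \<Longrightarrow> B i j = B' i j"
  shows "mat_cov \<nu> \<mu> A B = mat_cov \<nu> \<mu> A' B'"
  using assms mat_mean_cong[of \<nu> \<mu> A A'] mat_mean_cong[of \<nu> \<mu> B B'] by (simp add: mat_cov_def)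

lemma mat_var_nonneg: "mat_var \<nu> \<mu> A \<ge> 0"
  by (simp add: mat_var_def mat_cov_def sum_nonneg)

lemma psnr_eq_infinity:
  assumes "\<And>c i j. c \<in> {1..3} \<Longrightarrow> i \<in> {1..\<nu>} \<Longrightarrow> j \<in> {1..\<mu>} \<Longrightarrow> A c i j = B c i j"
  shows "psnr maxf \<alpha> \<nu> \<mu> A B = \<infinity>"
  using assms by (simp add: psnr_def mse_def luma_def)

lemma ssim_eq_1:
  assumes "\<And>c i j. c \<in> {1..3} \<Longrightarrow> i \<in> {1..\<nu>} \<Longrightarrow> j \<in> {1..\<mu>} \<Longrightarrow> A c i j = B c i j"
    and "c1 > 0" "c2 > 0"
  shows "ssim c1 c2 \<alpha> \<nu> \<mu> A B = 1"
proof -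
  define Y where "Y = luma \<alpha> A"
  have Y: "luma \<alpha> B i j = Y i j" if "i \<in> {1..\<nu>}" "j \<in> {1..\<mu>}" for i j
    unfolding Y_def using assms(1) that by (intro luma_cong) auto
  have "mat_mean \<nu> \<mu> Y * mat_mean \<nu> \<mu> Y \<ge> 0"
    by simp
  then have "2 * mat_mean \<nu> \<mu> Y * mat_mean \<nu> \<mu> Y + c1 > 0" "2 * mat_var \<nu> \<mu> Y + c2 > 0"
    using assms(2,3) mat_var_nonneg[of \<nu> \<mu> Y] by linarith+
  moreover have "mat_mean \<nu> \<mu> (luma \<alpha> B) = mat_mean \<nu> \<mu> Y"
    by (rule mat_mean_cong) (rule Y)
  moreover have "mat_cov \<nu> \<mu> Y (luma \<alpha> B) = mat_var \<nu> \<mu> Y"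
    "mat_var \<nu> \<mu> (luma \<alpha> B) = mat_var \<nu> \<mu> Y"
    unfolding mat_var_def by (rule mat_cov_cong; rule Y refl; assumption)+
  ultimately show ?thesis
    by (simp add: ssim_def Let_def Y_def[symmetric] power2_eq_square)
qed

lemma nat_ratio_eq_odd:
  assumes "real n / real N = 2 * real l - 1"
  shows "l \<ge> 1" "N > 0" "n = (2 * l - 1) * N"
proof -
  show "l \<ge> 1"
    using assms divide_nonneg_nonneg[of "real n" "real N"] by (cases l) auto
  then show "N > 0"
    using assms by (cases N) auto
  with assms \<open>l \<ge> 1\<close> have "real n = real ((2 * l - 1) * N)"
    by (simp add: field_simps)
  then show "n = (2 * l - 1) * N"
    by (simp only: of_nat_eq_iff)
qed

theorem proposition1:
  fixes l n1 n2 N1 N2 m1 m2 :: nat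
    and f ft :: "nat \<Rightarrow> real \<Rightarrow> real \<Rightarrow> real"
    and \<alpha> :: "nat \<Rightarrow> real" and maxf c1 c2 s :: real
    and I It R Rt :: cimage
  assumes s_def: "s = 2 * real l - 1"
    and ratio1: "real n1 / real N1 = s" and ratio2: "real n2 / real N2 = s"
    and m1: "m1 < n1" and m2: "m2 < n2"
    and maxf: "maxf > 0" and c1: "c1 > 0" and c2: "c2 > 0"
    and I_def: "I = (\<lambda>c i j. f c (cheb n1 i) (cheb n2 j))"
    and It_def: "It = (\<lambda>c i j. ft c (cheb n1 i) (cheb n2 j))"
    and R_def: "R = (\<lambda>c i j. f c (cheb N1 i) (cheb N2 j))"
    and Rt_def: "Rt = (\<lambda>c i j. vp_V n1 n2 m1 m2 (ft c) (cheb N1 i) (cheb N2 j))"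
  shows "mse_color N1 N2 R Rt \<le> s\<^sup>2 * mse_color n1 n2 I It
    \<and> mse N1 N2 (luma \<alpha> R) (luma \<alpha> Rt) \<le> s\<^sup>2 * mse n1 n2 (luma \<alpha> I) (luma \<alpha> It)
    \<and> ((\<forall>c\<in>{1..3}. \<forall>i\<in>{1..n1}. \<forall>j\<in>{1..n2}. I c i j = It c i j) \<longrightarrow>
         psnr maxf \<alpha> N1 N2 R Rt = \<infinity> \<and> ssim c1 c2 \<alpha> N1 N2 R Rt = 1)"
proof -
  note grid1 = nat_ratio_eq_odd[OF ratio1[unfolded s_def]]
    and grid2 = nat_ratio_eq_odd[OF ratio2[unfolded s_def]]
  define K where "K = nested_cheb_index l"
  note nested1 = cheb_nested_node[OF grid1(1) grid1(3), folded K_def]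
    and nested2 = cheb_nested_node[OF grid1(1) grid2(3), folded K_def]
  have restrict: "R c i j = I c (K i) (K j) \<and> Rt c i j = It c (K i) (K j)"
    if "i \<in> {1..N1}" "j \<in> {1..N2}" for c i j
    using nested1(1)[OF that(1)] nested2(1)[OF that(2)]
      nested1(2)[OF that(1), symmetric] nested2(2)[OF that(2), symmetric]
    by (simp add: R_def I_def Rt_def It_def vp_V_cheb)
  note mse_sub = mse_nested_subgrid_le[OF grid1(1) grid1(3) grid2(3), folded K_def s_def]
  have "mse_color N1 N2 R Rt \<le> s\<^sup>2 * mse_color n1 n2 I It"
    by (intro mse_color_le_channelwise mse_sub) (use restrict in auto)
  moreover have "mse N1 N2 (luma \<alpha> R) (luma \<alpha> Rt) \<le> s\<^sup>2 * mse n1 n2 (luma \<alpha> I) (luma \<alpha> It)"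
    by (intro mse_sub) (use restrict in \<open>auto intro: luma_cong\<close>)
  moreover have "psnr maxf \<alpha> N1 N2 R Rt = \<infinity> \<and> ssim c1 c2 \<alpha> N1 N2 R Rt = 1"
    if "\<forall>c\<in>{1..3}. \<forall>i\<in>{1..n1}. \<forall>j\<in>{1..n2}. I c i j = It c i j"
  proof -
    have "R c i j = Rt c i j" if "c \<in> {1..3}" "i \<in> {1..N1}" "j \<in> {1..N2}" for c i j
      using restrict[OF that(2,3)] nested1(1)[OF that(2)] nested2(1)[OF that(3)] that(1) \<open>\<forall>c\<in>{1..3}. _\<close> by simp
    then show ?thesis
      using psnr_eq_infinity ssim_eq_1 c1 c2 by blast
  qed
  ultimately show ?thesis
    by blast
qed

end
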